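(* Let $N\ge1$ and $W=W_N:=1+\sum_{n=1}^N\frac{P_{n-1}(y)}{x^n}\in A$. Then there are polynomials $u(y),v(y),\dots$ such that \[ W-1-\frac{y}{x}+\frac{1}{x}W+W_x+\frac{1}{x}W_y-\frac{1}{x}\log W=-\frac{P_N(y)}{x^{N+1}}+\frac{u(y)}{x^{N+2}}+\frac{v(y)}{x^{N+3}}+\cdots \]
   Context: Let $A$ be the ring of formal series $a=\sum_{n=0}^\infty \frac{q_n(y)}{x^n}$, each $q_n$ a complex polynomial of degree at most $n$, with the obvious ring operations and the $x^{-1}$-adic topology. Formal derivatives: $a_x=-\sum_{n\ge1}\frac{n q_n(y)}{x^{n+1}}$, $a_y=\sum_{n\ge1}\frac{q_n'(y)}{x^n}$. For $1+u\in A$ with $u$ having zero constant term, $\log(1+u)=\sum_{k\ge1}(-1)^{k+1}u^k/k$. Let $V$ be the unique solution in $A$ of $V=1+\frac{y}{x}-\frac{1}{x}V-V_x-\frac{1}{x}V_y+\frac{1}{x}\log V$, and define the polynomials $P_{n-1}$ ($n\ge1$) by $V=1+\sum_{n=1}^\infty\frac{P_{n-1}(y)}{x^n}$. *)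

theory Defs
  imports "HOL-Computational_Algebra.Polynomial"
begin

text \<open>An element a = sum_n q_n(y)/x^n of the ring A is represented by its coefficient
  sequence q :: nat => complex poly (q n = coefficient of x^(-n)).\<close>

type_synonym ser = "nat \<Rightarrow> complex poly"

definition inA :: "ser \<Rightarrow> bool" where
  "inA a \<longleftrightarrow> (\<forall>n. degree (a n) \<le> n)"

definition sone :: ser where
  "sone n = (if n = 0 then 1 else 0)"

definition s_yx :: ser where
  "s_yx n = (if n = 1 then [:0, 1:] else 0)"

definition smul :: "ser \<Rightarrow> ser \<Rightarrow> ser" where
  "smul a b n = (\<Sum>i\<le>n. a i * b (n - i))"

fun spow :: "ser \<Rightarrow> nat \<Rightarrow> ser" where
  "spow a 0 = sone"
| "spow a (Suc k) = smul a (spow a k)"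

definition sshift :: "ser \<Rightarrow> ser" where
  "sshift a n = (if n = 0 then 0 else a (n - 1))"

text \<open>a_x = - sum_{n>=1} n q_n / x^(n+1)\<close>
definition sdx :: "ser \<Rightarrow> ser" where
  "sdx a n = (if n = 0 then 0 else - smult (of_nat (n - 1)) (a (n - 1)))"

definition sdy :: "ser \<Rightarrow> ser" where
  "sdy a n = pderiv (a n)"

text \<open>log a = log(1+u), u = a - 1, = sum_{k>=1} (-1)^(k+1) u^k / k ; since u^k has no
  terms of order < k in 1/x (when u has zero constant term), the coefficient of x^(-n)
  only involves k <= n.\<close>
definition slog :: "ser \<Rightarrow> ser" where
  "slog a n = (\<Sum>k\<in>{1..n}. smult ((-1) ^ (k + 1) / of_nat k)
                   (spow (\<lambda>m. a m - sone m) k n))"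

definition Veq :: "ser \<Rightarrow> bool" where
  "Veq V \<longleftrightarrow> (\<forall>n. V n = sone n + s_yx n - sshift V n - sdx V n
                        - sshift (sdy V) n + sshift (slog V) n)"

definition Vsol :: ser where
  "Vsol = (THE V. inA V \<and> Veq V)"

definition P :: "nat \<Rightarrow> complex poly" where
  "P m = Vsol (Suc m)"

end

theory Submission
  imports Defs
begin

text \<open>The right-hand side R of the equation V = R(V) is causal: the coefficient of x^(-n)
  in R(a) depends only on the coefficients of order < n of a, because every term of R other
  than 1 + y/x carries a factor 1/x. Hence R has a unique fixed point, the solution V, and it
  is computed order by order. The truncation W agrees with V in orders \<le> N, so R(W) agrees
  with R(V) = V in orders \<le> N + 1; thus W - R(W), the left-hand side of the claim, vanishes
  up to order N, and its coefficient of order N + 1 is 0 - V_(N+1) = -P_N.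
  The argument also covers N = 0.\<close>

definition causal :: "((nat \<Rightarrow> 'a) \<Rightarrow> nat \<Rightarrow> 'a) \<Rightarrow> bool" where
  "causal F \<longleftrightarrow> (\<forall>a b n. (\<forall>m<n. a m = b m) \<longrightarrow> F a n = F b n)"

lemma causalD: "causal F \<Longrightarrow> (\<And>m. m < n \<Longrightarrow> a m = b m) \<Longrightarrow> F a n = F b n"
  unfolding causal_def by blast

lemma causal_funpow_Suc:
  assumes "causal F" "m < k"
  shows "(F ^^ Suc k) a m = (F ^^ k) a m"
  using assms(2)
proof (induction k arbitrary: m)
  case (Suc k)
  then have "F ((F ^^ Suc k) a) m = F ((F ^^ k) a) m"
    by (intro causalD[OF assms(1), of m "(F ^^ Suc k) a" "(F ^^ k) a"]) auto
  then show ?case by simp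
qed simp

lemma causal_funpow_stable:
  assumes "causal F" "m < k" "k \<le> j"
  shows "(F ^^ j) a m = (F ^^ k) a m"
  using assms(3)
proof (induction j rule: dec_induct)
  case (step j)
  with assms(2) have "(F ^^ Suc j) a m = (F ^^ j) a m"
    by (intro causal_funpow_Suc[OF assms(1)]) simp
  with step.IH show ?case by simp
qed simp

lemma causal_fixpoint:
  assumes "causal F"
  shows "F (\<lambda>n. (F ^^ Suc n) a n) = (\<lambda>n. (F ^^ Suc n) a n)"
proof
  fix n
  have "(F ^^ Suc m) a m = (F ^^ n) a m" if "m < n" for m
    using causal_funpow_stable[OF assms, of m "Suc m" n a] that by simp
  then have "F (\<lambda>n. (F ^^ Suc n) a n) n = F ((F ^^ n) a) n"
    by (rule causalD[OF assms])
  then show "F (\<lambda>n. (F ^^ Suc n) a n) n = (F ^^ Suc n) a n" by simp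
qed

lemma causal_fixpoint_unique:
  assumes "causal F" "F a = a" "F b = b"
  shows "a = b"
proof
  fix n show "a n = b n"
  proof (induction n rule: less_induct)
    case (less n)
    then have "F a n = F b n" by (rule causalD[OF assms(1)])
    with assms(2,3) show ?case by metis
  qed
qed

definition veq_rhs :: "ser \<Rightarrow> ser" where
  "veq_rhs a n = sone n + s_yx n - sshift a n - sdx a n - sshift (sdy a) n + sshift (slog a) n"

lemma Veq_iff_veq_rhs: "Veq V \<longleftrightarrow> veq_rhs V = V"
  unfolding Veq_def veq_rhs_def by (auto simp: fun_eq_iff)

lemma smul_cong: "(\<And>m. m \<le> n \<Longrightarrow> a m = a' m) \<Longrightarrow> (\<And>m. m \<le> n \<Longrightarrow> b m = b' m)
    \<Longrightarrow> smul a b n = smul a' b' n"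
  unfolding smul_def by (intro sum.cong) auto

lemma spow_cong: "(\<And>m. m \<le> n \<Longrightarrow> a m = a' m) \<Longrightarrow> spow a k n = spow a' k n"
  by (induction k arbitrary: n) (auto intro!: smul_cong)

lemma slog_cong: "(\<And>m. m \<le> n \<Longrightarrow> a m = a' m) \<Longrightarrow> slog a n = slog a' n"
  unfolding slog_def by (intro sum.cong refl arg_cong[where f = "smult _"] spow_cong) auto

lemma causal_veq_rhs: "causal veq_rhs"
  unfolding causal_def
proof (intro allI impI)
  fix a b :: ser and n assume ab: "\<forall>m<n. a m = b m"
  show "veq_rhs a n = veq_rhs b n"
  proof (cases n)
    case (Suc k)
    with ab have "slog a k = slog b k" by (intro slog_cong) auto
    with ab Suc show ?thesis by (simp add: veq_rhs_def sshift_def sdx_def sdy_def)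
  qed (simp add: veq_rhs_def sshift_def sdx_def)
qed

lemma inA_sone: "inA sone"
  unfolding inA_def sone_def by auto

lemma inA_s_yx: "inA s_yx"
  unfolding inA_def s_yx_def by auto

lemma inA_diff: "inA a \<Longrightarrow> inA b \<Longrightarrow> inA (\<lambda>n. a n - b n)"
  unfolding inA_def using degree_diff_le by blast

lemma inA_add: "inA a \<Longrightarrow> inA b \<Longrightarrow> inA (\<lambda>n. a n + b n)"
  unfolding inA_def using degree_add_le by blast

lemma inA_smul: "inA a \<Longrightarrow> inA b \<Longrightarrow> inA (smul a b)"
  unfolding inA_def smul_def
proof (intro allI degree_sum_le)
  fix n i :: nat assume a: "\<forall>n. degree (a n) \<le> n" and b: "\<forall>n. degree (b n) \<le> n" and i: "i \<in> {..n}"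
  have "degree (a i * b (n - i)) \<le> degree (a i) + degree (b (n - i))"
    by (rule degree_mult_le)
  also have "\<dots> \<le> i + (n - i)" using a b by (meson add_mono)
  finally show "degree (a i * b (n - i)) \<le> n" using i by simp
qed simp

lemma inA_spow: "inA a \<Longrightarrow> inA (spow a k)"
  by (induction k) (auto intro: inA_smul inA_sone)

lemma inA_slog: "inA a \<Longrightarrow> inA (slog a)"
  unfolding inA_def slog_def
proof (intro allI degree_sum_le)
  fix n k assume "\<forall>n. degree (a n) \<le> n"
  then have "inA (spow (\<lambda>m. a m - sone m) k)"
    by (intro inA_spow inA_diff inA_sone) (simp add: inA_def)
  then show "degree (smult ((- 1) ^ (k + 1) / of_nat k) (spow (\<lambda>m. a m - sone m) k n)) \<le> n"
    unfolding inA_def by (meson degree_smult_le order.trans)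
qed simp

lemma inA_sshift:
  assumes "\<And>n. degree (a n) \<le> Suc n"
  shows "inA (sshift a)"
  unfolding inA_def sshift_def
proof
  fix n show "degree (if n = 0 then 0 else a (n - 1)) \<le> n"
    using assms[of "n - 1"] by (cases n) simp_all
qed

lemma inA_veq_rhs:
  assumes "inA a"
  shows "inA (veq_rhs a)"
proof -
  have deg: "degree (a n) \<le> Suc n" for n
    using assms unfolding inA_def by (meson le_SucI)
  have dx: "inA (sdx a)"
    unfolding inA_def sdx_def
  proof
    fix n show "degree (if n = 0 then 0 else - smult (of_nat (n - 1)) (a (n - 1))) \<le> n"
      using deg[of "n - 1"] by (cases n) (simp_all add: le_trans[OF degree_smult_le])
  qed
  have dy: "inA (sshift (sdy a))"
    using deg by (intro inA_sshift) (simp add: sdy_def degree_pderiv le_trans[OF diff_le_self])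
  have lg: "inA (sshift (slog a))"
    using inA_slog[OF assms] by (intro inA_sshift) (simp add: inA_def le_SucI)
  show ?thesis
    unfolding veq_rhs_def
    by (intro inA_add inA_diff inA_sone inA_s_yx inA_sshift[OF deg] dx dy lg)
qed

lemma Vsol_eq_fixpoint: "Vsol = (\<lambda>n. (veq_rhs ^^ Suc n) (\<lambda>_. 0) n)"
  (is "_ = ?V")
  unfolding Vsol_def
proof (rule the_equality)
  have "inA ((veq_rhs ^^ k) (\<lambda>_. 0))" for k
  proof (induction k)
    case 0 show ?case by (simp add: inA_def)
  qed (simp add: inA_veq_rhs)
  then have "inA ?V" unfolding inA_def by blast
  then show "inA ?V \<and> Veq ?V"
    using causal_fixpoint[OF causal_veq_rhs] by (simp add: Veq_iff_veq_rhs)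
next
  fix V assume "inA V \<and> Veq V"
  then show "V = ?V"
    using causal_fixpoint[OF causal_veq_rhs] causal_fixpoint_unique[OF causal_veq_rhs]
    by (simp add: Veq_iff_veq_rhs)
qed

lemma veq_rhs_Vsol: "veq_rhs Vsol = Vsol"
  unfolding Vsol_eq_fixpoint by (rule causal_fixpoint[OF causal_veq_rhs])

theorem theorem4p3:
  fixes N :: nat and W E :: ser
  assumes "N \<ge> 1"
    and "W = (\<lambda>n. if n = 0 then 1 else if n \<le> N then P (n - 1) else 0)"
    and "E = (\<lambda>n. W n - sone n - s_yx n + sshift W n + sdx W n
                  + sshift (sdy W) n - sshift (slog W) n)"
  shows "(\<forall>n\<le>N. E n = 0) \<and> E (N + 1) = - P N"
proof -
  have E: "E n = W n - veq_rhs W n" for n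
    using assms(3) unfolding veq_rhs_def by (simp add: algebra_simps)
  have "Vsol 0 = 1"
    using fun_cong[OF veq_rhs_Vsol, of 0] by (simp add: veq_rhs_def sone_def s_yx_def sshift_def sdx_def)
  with assms(2) have W_Vsol: "W m = Vsol m" if "m \<le> N" for m
    using that by (simp add: P_def)
  have rhs_W: "veq_rhs W n = Vsol n" if "n \<le> Suc N" for n
  proof -
    have "veq_rhs W n = veq_rhs Vsol n"
      using that by (intro causalD[OF causal_veq_rhs, of _ W Vsol] W_Vsol) simp
    then show ?thesis by (simp add: veq_rhs_Vsol)
  qed
  have "E n = 0" if "n \<le> N" for n
    using that E rhs_W W_Vsol by simp
  moreover have "E (N + 1) = - P N"
    using E rhs_W[of "Suc N"] assms(2) by (simp add: P_def)
  ultimately show ?thesis by blast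
qed

end
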